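(* For every $m\in\mathbb{N}_0$ and every real $t$ with $|t|<1$, \[ \frac{(\arcsin t)^{m}}{\sqrt{1-t^2}}=t^m\left[1+\sum_{k=1}^{\infty}(-1)^k\frac{Q(m+1,2k;2)}{\binom{m+2k}{m}}\frac{(2t)^{2k}}{(2k)!}\right]. \]
   Context: $s(n,k)$ ($n\ge k\ge 0$) denotes the signed Stirling numbers of the first kind, defined by $\frac{[\ln(1+x)]^k}{k!}=\sum_{n=k}^\infty s(n,k)\frac{x^n}{n!}$ for $|x|<1$; equivalently $\prod_{j=0}^{n-1}(z-j)=\sum_{k=0}^n s(n,k)z^k$. For $m\in\mathbb{N}$, $k\in\mathbb{N}_0$ and $\alpha\in\mathbb{R}$ define \[ Q(m,k;\alpha)=\sum_{\ell=0}^{k}\binom{m+\ell-1}{m-1}\, s(m+k-1,m+\ell-1)\left(\frac{m+k-\alpha}{2}\right)^{\ell}, \] with the convention $0^0=1$. *)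

theory Defs
  imports "HOL-Analysis.Analysis" "HOL-Combinatorics.Stirling"
begin

definition signed_stirling :: "nat \<Rightarrow> nat \<Rightarrow> real" where
  "signed_stirling n k = (-1) ^ (n - k) * real (stirling n k)"

text \<open>Q(m,k;alpha) for m \<ge> 1 (0^0 = 1 holds for ^ in Isabelle).\<close>
definition Q :: "nat \<Rightarrow> nat \<Rightarrow> real \<Rightarrow> real" where
  "Q m k \<alpha> = (\<Sum>l = 0..k. real ((m + l - 1) choose (m - 1))
       * signed_stirling (m + k - 1) (m + l - 1)
       * ((real (m + k) - \<alpha>) / 2) ^ l)"

end

theory Submission
  imports Defs "HOL-Computational_Algebra.Polynomial" "HOL-Analysis.FPS_Convergence"
begin

text \<open>
  Write beta for arcsin_num and P_m for eval_fps (arcsin_pow_fps m), so that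
  P_m(x) = sum_n (m!/n!) beta(m,n) x^n with beta(m,0) = [m = 0], beta(m,1) = [m = 1] and
  beta(m,n+2) = (n+1)^2 beta(m,n) + beta(m-2,n). Since 0 <= beta(m,n) <= n!, P_m converges for
  |x| < 1, and the recursion says precisely that (1 - x^2) P_m'' - 3x P_m' - P_m = m(m-1) P_(m-2).
  By induction on m, sqrt(1 - x^2) P_m = arcsin^m: granted this for m - 2, the first-order relation
  (1 - x^2) P_m' - x P_m = m arcsin^(m-1) has zero derivative and holds at 0, and it says exactly
  that sqrt(1 - x^2) P_m - arcsin^m has zero derivative.

  For the coefficients, beta(m,n) vanishes unless n - m is even, and comparing recursions shows
  that beta(m,n) is (-4)^((n-m)/2) times the coefficient of z^m in the centred falling factorial
  prod_(i<n) (z + (n-1)/2 - i). Expanding that in powers of z + (n-1)/2 with Stirling numbers of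
  the first kind gives Q(m+1, n-m; 2).
\<close>

lemma coeff_linear_poly_power:
  fixes c :: "'a :: comm_semiring_1"
  shows "coeff ([:c, 1:] ^ j) m = (if m \<le> j then of_nat (j choose m) * c ^ (j - m) else 0)"
proof -
  have "[:c, 1:] ^ j = (monom 1 1 + [:c:]) ^ j"
    by (simp add: monom_altdef)
  also have "\<dots> = (\<Sum>k\<le>j. monom (of_nat (j choose k) * c ^ (j - k)) k)"
    unfolding binomial_ring
    by (simp add: monom_power poly_const_pow of_nat_mult_conv_smult monom_altdef mult.commute)
  finally show ?thesis
    by (simp add: coeff_sum)
qed

lemma prod_diff_of_nat_eq_signed_stirling:
  fixes y :: real
  shows "(\<Prod>i<n. y - real i) = (\<Sum>j\<le>n. signed_stirling n j * y ^ j)"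
proof -
  have "(\<Prod>i<n. y - real i) = (-1) ^ n * pochhammer (-y) n"
    using prod_uminus[of "\<lambda>i. real i - y" "{..<n}"]
    by (simp add: pochhammer_prod atLeast0LessThan)
  also have "\<dots> = (\<Sum>j\<le>n. (-1) ^ n * real (stirling n j) * (-y) ^ j)"
    by (simp add: stirling_pochhammer[symmetric] sum_distrib_left mult.assoc)
  also have "\<dots> = (\<Sum>j\<le>n. signed_stirling n j * y ^ j)"
  proof (intro sum.cong refl)
    fix j assume "j \<in> {..n}"
    then have "(-1::real) ^ n = (-1) ^ (n - j) * (-1) ^ j"
      by (simp add: power_add [symmetric])
    then show "(-1) ^ n * real (stirling n j) * (-y) ^ j = signed_stirling n j * y ^ j"
      by (simp add: signed_stirling_def power_minus')
  qed
  finally show ?thesis .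
qed

lemma fps_conv_radius_ge_1_if_bounded:
  fixes f :: "'a :: {banach, real_normed_div_algebra} fps"
  assumes "\<And>n. norm (fps_nth f n) \<le> B"
  shows "fps_conv_radius f \<ge> 1"
  unfolding fps_conv_radius_def
proof (rule conv_radius_geI_ex')
  fix r :: real assume r: "0 < r" "ereal r < 1"
  show "summable (\<lambda>n. fps_nth f n * of_real r ^ n)"
  proof (rule summable_comparison_test')
    show "summable (\<lambda>n. B * r ^ n)"
      using r by (intro summable_mult summable_geometric) auto
    show "norm (fps_nth f n * of_real r ^ n) \<le> B * r ^ n" for n
      using r assms[of n] by (simp add: norm_mult norm_power mult_right_mono)
  qed
qed

lemma sums_eval_fps_even:
  fixes f :: "'a :: {banach, real_normed_div_algebra} fps"
  assumes "\<And>k. fps_nth f (Suc (2 * k)) = 0" and "norm z < fps_conv_radius f"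
  shows "(\<lambda>k. fps_nth f (2 * k) * z ^ (2 * k)) sums eval_fps f z"
proof -
  have "fps_nth f n * z ^ n = 0" if "n \<notin> range (\<lambda>k. 2 * k)" for n
  proof -
    have "odd n"
      using that by (auto elim: evenE)
    then obtain k where "n = Suc (2 * k)"
      by (auto elim: oddE)
    then show ?thesis
      using assms(1)[of k] by simp
  qed
  moreover have "(\<lambda>n. fps_nth f n * z ^ n) sums eval_fps f z"
    using assms(2) by (rule sums_eval_fps)
  ultimately show ?thesis
    using sums_mono_reindex[of "\<lambda>k. 2 * k" "\<lambda>n. fps_nth f n * z ^ n"]
    by (simp add: strict_mono_def)
qed

lemma eq_at_0_if_deriv_zero:
  fixes f :: "real \<Rightarrow> real"
  assumes "\<And>y. \<bar>y\<bar> < 1 \<Longrightarrow> (f has_real_derivative 0) (at y)" and "\<bar>x\<bar> < 1"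
  shows "f x = f 0"
  using DERIV_isconst3[of "-1" 1 x 0 f] assms by (simp add: abs_less_iff)

fun arcsin_num :: "nat \<Rightarrow> nat \<Rightarrow> real" where
  "arcsin_num m 0 = (if m = 0 then 1 else 0)"
| "arcsin_num m (Suc 0) = (if m = 1 then 1 else 0)"
| "arcsin_num m (Suc (Suc n)) =
     (real (Suc n))\<^sup>2 * arcsin_num m n + (if m \<ge> 2 then arcsin_num (m - 2) n else 0)"

lemma arcsin_num_eq_0_if_less: "n < m \<Longrightarrow> arcsin_num m n = 0"
  by (induction m n rule: arcsin_num.induct) auto

lemma arcsin_num_diag [simp]: "arcsin_num n n = 1"
  by (induction n rule: nat_induct2) (auto simp: arcsin_num_eq_0_if_less)

lemma arcsin_num_eq_0_if_odd: "odd (n - m) \<Longrightarrow> arcsin_num m n = 0"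
proof (induction m n rule: arcsin_num.induct)
  case (3 m n)
  then consider "odd (n - m)" "m \<ge> 2 \<Longrightarrow> odd (n - (m - 2))" | "m = Suc n" | "m > Suc (Suc n)"
    by (cases "m \<le> n"; cases "m = Suc n"; cases "m = Suc (Suc n)") auto
  then show ?case
    using 3 by cases (auto simp: arcsin_num_eq_0_if_less)
qed auto

lemma arcsin_num_nonneg: "arcsin_num m n \<ge> 0"
  by (induction m n rule: arcsin_num.induct) auto

lemma arcsin_num_le_fact: "arcsin_num m n \<le> fact n"
proof (induction m n rule: arcsin_num.induct)
  case (3 m n)
  have "(real (Suc n))\<^sup>2 * arcsin_num m n \<le> (real (Suc n))\<^sup>2 * fact n"
    using 3 by (intro mult_left_mono) auto
  moreover have "(if m \<ge> 2 then arcsin_num (m - 2) n else 0) \<le> fact n"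
    using 3 by auto
  ultimately have "arcsin_num m (Suc (Suc n)) \<le> (real (Suc n))\<^sup>2 * fact n + fact n"
    unfolding arcsin_num.simps by (rule add_mono)
  also have "\<dots> \<le> fact (Suc (Suc n))"
    by (simp add: power2_eq_square algebra_simps)
  finally show ?case .
qed auto

definition centered_falling_poly :: "nat \<Rightarrow> real poly" where
  "centered_falling_poly n = (\<Prod>i<n. [:(real n - 1) / 2 - real i, 1:])"

lemma centered_falling_poly_eq_signed_stirling:
  "centered_falling_poly n
     = (\<Sum>j\<le>n. smult (signed_stirling n j) ([:(real n - 1) / 2, 1:] ^ j))"
proof (rule poly_eq_poly_eq_iff [THEN iffD1], rule ext)
  fix z
  have "poly (centered_falling_poly n) z = (\<Prod>i<n. ((real n - 1) / 2 + z) - real i)"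
    by (simp add: centered_falling_poly_def poly_prod algebra_simps)
  then show "poly (centered_falling_poly n) z
      = poly (\<Sum>j\<le>n. smult (signed_stirling n j) ([:(real n - 1) / 2, 1:] ^ j)) z"
    by (simp add: prod_diff_of_nat_eq_signed_stirling poly_sum algebra_simps)
qed

lemma coeff_centered_falling_poly:
  "coeff (centered_falling_poly n) m = (\<Sum>j\<le>n. signed_stirling n j *
     (if m \<le> j then real (j choose m) * ((real n - 1) / 2) ^ (j - m) else 0))"
  by (simp add: centered_falling_poly_eq_signed_stirling coeff_sum coeff_linear_poly_power)

lemma coeff_centered_falling_poly_eq_0: "n < m \<Longrightarrow> coeff (centered_falling_poly n) m = 0"
  by (simp add: coeff_centered_falling_poly)

lemma coeff_centered_falling_poly_eq_Q:
  "coeff (centered_falling_poly (m + k)) m = Q (m + 1) k 2"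
proof -
  define g where "g j = signed_stirling (m + k) j *
    (if m \<le> j then real (j choose m) * ((real (m + k) - 1) / 2) ^ (j - m) else 0)" for j
  have "coeff (centered_falling_poly (m + k)) m = (\<Sum>j\<in>{m..m + k}. g j)"
    unfolding coeff_centered_falling_poly g_def [symmetric]
    by (rule sum.mono_neutral_right) (auto simp: g_def)
  also have "\<dots> = (\<Sum>l = 0..k. g (l + m))"
    by (simp add: sum.shift_bounds_cl_nat_ivl [of g 0 m k, symmetric] add.commute)
  also have "\<dots> = Q (m + 1) k 2"
    unfolding Q_def g_def by (intro sum.cong refl) (simp add: algebra_simps)
  finally show ?thesis .
qed

lemma centered_falling_poly_Suc_Suc:
  "centered_falling_poly (Suc (Suc n))
     = [:- ((real n + 1) / 2)\<^sup>2, 0, 1:] * centered_falling_poly n"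
proof -
  define c where "c = (real n + 1) / 2"
  let ?f = "\<lambda>i. [:(real (Suc (Suc n)) - 1) / 2 - real i, 1:]"
  have "centered_falling_poly (Suc (Suc n)) = ?f 0 * (\<Prod>i<Suc n. ?f (Suc i))"
    unfolding centered_falling_poly_def by (simp only: prod.lessThan_Suc_shift)
  also have "\<dots> = ?f 0 * (\<Prod>i<n. ?f (Suc i)) * ?f (Suc n)"
    by (simp only: prod.lessThan_Suc mult.assoc)
  also have "(\<Prod>i<n. ?f (Suc i)) = centered_falling_poly n"
    unfolding centered_falling_poly_def by (intro prod.cong) (auto simp: algebra_simps)
  also have "?f 0 = [:c, 1:]"
    by (simp add: c_def field_simps)
  also have "?f (Suc n) = [:-c, 1:]"
    by (simp add: c_def field_simps)
  finally show ?thesis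
    by (simp add: c_def mult_pCons_left power2_eq_square algebra_simps)
qed

lemma coeff_centered_falling_poly_Suc_Suc:
  "coeff (centered_falling_poly (Suc (Suc n))) m =
     (if m \<ge> 2 then coeff (centered_falling_poly n) (m - 2) else 0)
     - ((real n + 1) / 2)\<^sup>2 * coeff (centered_falling_poly n) m"
  by (cases m rule: nat.exhaust [case_product nat.exhaust]; cases m)
     (auto simp: centered_falling_poly_Suc_Suc mult_pCons_left coeff_pCons split: nat.splits)

text \<open>Both sides vanish for n < m and for odd n - m, so the truncated exponent does no harm.\<close>

lemma arcsin_num_eq_coeff_centered_falling_poly:
  "arcsin_num m n = (-4) ^ ((n - m) div 2) * coeff (centered_falling_poly n) m"
proof (induction m n rule: arcsin_num.induct)
  case (1 m)
  then show ?case by (simp add: centered_falling_poly_def)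
next
  case (2 m)
  then show ?case by (simp add: centered_falling_poly_def coeff_pCons split: nat.split)
next
  case (3 m n)
  define e where "e = (Suc (Suc n) - m) div 2"
  let ?c = "coeff (centered_falling_poly n)"
  have "(real (Suc n))\<^sup>2 * arcsin_num m n = (-4) ^ e * (- (((real n + 1) / 2)\<^sup>2 * ?c m))"
  proof (cases "m \<le> n")
    case True
    then have "e = Suc ((n - m) div 2)"
      unfolding e_def by presburger
    then show ?thesis
      using "3.IH"(1) by (simp add: power2_eq_square field_simps)
  next
    case False
    then show ?thesis
      by (simp add: arcsin_num_eq_0_if_less coeff_centered_falling_poly_eq_0)
  qed
  moreover have "(if m \<ge> 2 then arcsin_num (m - 2) n else 0)
      = (-4) ^ e * (if m \<ge> 2 then ?c (m - 2) else 0)"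
    using "3.IH"(2) by (auto simp: e_def Suc_diff_le)
  ultimately show ?case
    by (simp add: coeff_centered_falling_poly_Suc_Suc e_def algebra_simps)
qed

lemma arcsin_num_eq_Q: "arcsin_num m (m + 2 * k) = (-4) ^ k * Q (m + 1) (2 * k) 2"
  by (simp add: arcsin_num_eq_coeff_centered_falling_poly coeff_centered_falling_poly_eq_Q)

definition arcsin_pow_fps :: "nat \<Rightarrow> real fps" where
  "arcsin_pow_fps m = Abs_fps (\<lambda>n. fact m / fact n * arcsin_num m n)"

lemma fps_conv_radius_arcsin_pow_fps: "fps_conv_radius (arcsin_pow_fps m) \<ge> 1"
proof (rule fps_conv_radius_ge_1_if_bounded)
  fix n
  have "norm (fps_nth (arcsin_pow_fps m) n) = fact m * (arcsin_num m n / fact n)"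
    using arcsin_num_nonneg[of m n] by (simp add: arcsin_pow_fps_def)
  also have "\<dots> \<le> fact m * 1"
    using arcsin_num_le_fact[of m n] by (intro mult_left_mono) auto
  finally show "norm (fps_nth (arcsin_pow_fps m) n) \<le> fact m"
    by simp
qed

lemma arcsin_pow_fps_nth_Suc_Suc:
  "real (Suc n) * real (Suc (Suc n)) * fps_nth (arcsin_pow_fps m) (Suc (Suc n))
     = (real (Suc n))\<^sup>2 * fps_nth (arcsin_pow_fps m) n
       + real m * (real m - 1) * fps_nth (arcsin_pow_fps (m - 2)) n"
proof -
  have "real (Suc n) * real (Suc (Suc n)) * fps_nth (arcsin_pow_fps m) (Suc (Suc n))
      = fact m / fact n * arcsin_num m (Suc (Suc n))"
  proof -
    have "fact (Suc (Suc n)) = real (Suc n) * real (Suc (Suc n)) * (fact n :: real)"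
      by simp
    then show ?thesis
      by (simp add: arcsin_pow_fps_def del: arcsin_num.simps fact_Suc of_nat_Suc)
  qed
  also have "\<dots> = (real (Suc n))\<^sup>2 * fps_nth (arcsin_pow_fps m) n
      + fact m / fact n * (if m \<ge> 2 then arcsin_num (m - 2) n else 0)"
    by (simp add: arcsin_pow_fps_def algebra_simps)
  also have "fact m / fact n * (if m \<ge> 2 then arcsin_num (m - 2) n else 0)
      = real m * (real m - 1) * fps_nth (arcsin_pow_fps (m - 2)) n"
  proof (cases "m \<ge> 2")
    case True
    then obtain k where "m = Suc (Suc k)"
      using add_2_eq_Suc le_Suc_ex by blast
    then show ?thesis
      by (simp add: arcsin_pow_fps_def algebra_simps add_divide_distrib)
  next
    case False
    then have "real m * (real m - 1) = 0"
      by (cases m) auto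
    with False show ?thesis
      by simp
  qed
  finally show ?thesis .
qed

lemma arcsin_pow_fps_ode:
  "(1 - fps_X\<^sup>2) * fps_deriv (fps_deriv (arcsin_pow_fps m))
     - 3 * fps_X * fps_deriv (arcsin_pow_fps m) - arcsin_pow_fps m
   = fps_const (real m * (real m - 1)) * arcsin_pow_fps (m - 2)"
proof (rule fps_ext)
  fix n
  show "fps_nth ((1 - fps_X\<^sup>2) * fps_deriv (fps_deriv (arcsin_pow_fps m))
      - 3 * fps_X * fps_deriv (arcsin_pow_fps m) - arcsin_pow_fps m) n
    = fps_nth (fps_const (real m * (real m - 1)) * arcsin_pow_fps (m - 2)) n"
    using arcsin_pow_fps_nth_Suc_Suc[of n m]
    by (cases n; cases "n - 1")
       (simp_all add: numeral_fps_const fps_X_power_mult_nth ring_distribs,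
        simp_all add: algebra_simps power2_eq_square)
qed

lemma norm_less_fps_conv_radius_arcsin_pow_fps:
  fixes x :: real
  assumes "\<bar>x\<bar> < 1"
  shows "norm x < fps_conv_radius (arcsin_pow_fps m)"
    and "norm x < fps_conv_radius (fps_deriv (arcsin_pow_fps m))"
    and "norm x < fps_conv_radius (fps_deriv (fps_deriv (arcsin_pow_fps m)))"
proof -
  have "ereal (norm x) < 1"
    using assms by simp
  then show "norm x < fps_conv_radius (arcsin_pow_fps m)"
    using fps_conv_radius_arcsin_pow_fps by (rule less_le_trans)
  then show "norm x < fps_conv_radius (fps_deriv (arcsin_pow_fps m))"
    using fps_conv_radius_deriv by (rule less_le_trans)
  then show "norm x < fps_conv_radius (fps_deriv (fps_deriv (arcsin_pow_fps m)))"
    using fps_conv_radius_deriv by (rule less_le_trans)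
qed

lemma eval_arcsin_pow_fps_ode:
  fixes x :: real
  assumes "\<bar>x\<bar> < 1"
  shows "(1 - x\<^sup>2) * eval_fps (fps_deriv (fps_deriv (arcsin_pow_fps m))) x
      - 3 * x * eval_fps (fps_deriv (arcsin_pow_fps m)) x - eval_fps (arcsin_pow_fps m) x
    = real m * (real m - 1) * eval_fps (arcsin_pow_fps (m - 2)) x"
proof -
  have mult: "\<bar>x\<bar> < fps_conv_radius (f * g)"
    if "\<bar>x\<bar> < fps_conv_radius f" "\<bar>x\<bar> < fps_conv_radius g" for f g :: "real fps"
    using that fps_conv_radius_mult[of f g] by (meson less_le_trans min_less_iff_conj)
  have diff: "\<bar>x\<bar> < fps_conv_radius (f - g)"
    if "\<bar>x\<bar> < fps_conv_radius f" "\<bar>x\<bar> < fps_conv_radius g" for f g :: "real fps"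
    using that fps_conv_radius_diff[of f g] by (meson less_le_trans min_less_iff_conj)
  show ?thesis
    using arg_cong[OF arcsin_pow_fps_ode, of "\<lambda>f. eval_fps f x" m]
    by (simp add: eval_fps_mult eval_fps_diff mult diff
        norm_less_fps_conv_radius_arcsin_pow_fps[OF assms, simplified])
qed

lemma has_real_derivative_eval_arcsin_pow_fps:
  fixes x :: real
  assumes "\<bar>x\<bar> < 1"
  shows "(eval_fps (arcsin_pow_fps m) has_real_derivative
           eval_fps (fps_deriv (arcsin_pow_fps m)) x) (at x)"
    and "(eval_fps (fps_deriv (arcsin_pow_fps m)) has_real_derivative
           eval_fps (fps_deriv (fps_deriv (arcsin_pow_fps m))) x) (at x)"
  using norm_less_fps_conv_radius_arcsin_pow_fps[OF assms]
  by (auto intro: has_field_derivative_eval_fps)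

lemma arcsin_pow_fps_first_order_ode:
  fixes x :: real
  assumes prev: "\<And>y. m \<ge> 2 \<Longrightarrow> \<bar>y\<bar> < 1 \<Longrightarrow>
      arcsin y ^ (m - 2) = sqrt (1 - y\<^sup>2) * eval_fps (arcsin_pow_fps (m - 2)) y"
    and x: "\<bar>x\<bar> < 1"
  shows "(1 - x\<^sup>2) * eval_fps (fps_deriv (arcsin_pow_fps m)) x - x * eval_fps (arcsin_pow_fps m) x
    = real m * arcsin x ^ (m - 1)"
proof -
  define F where "F y = (1 - y\<^sup>2) * eval_fps (fps_deriv (arcsin_pow_fps m)) y
    - y * eval_fps (arcsin_pow_fps m) y - real m * arcsin y ^ (m - 1)" for y
  have "(F has_real_derivative 0) (at y)" if y: "\<bar>y\<bar> < 1" for y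
  proof -
    have "1 - y\<^sup>2 > 0"
      using y by (simp add: abs_square_less_1)
    have prev': "real m * real (m - 1) * (arcsin y ^ (m - 2) / sqrt (1 - y\<^sup>2))
        = real m * (real m - 1) * eval_fps (arcsin_pow_fps (m - 2)) y"
      using prev[OF _ y] \<open>1 - y\<^sup>2 > 0\<close> by (cases "m \<ge> 2") (auto simp: of_nat_diff)
    have "(F has_real_derivative
        (1 - y\<^sup>2) * eval_fps (fps_deriv (fps_deriv (arcsin_pow_fps m))) y
        - 3 * y * eval_fps (fps_deriv (arcsin_pow_fps m)) y - eval_fps (arcsin_pow_fps m) y
        - real m * real (m - 1) * (arcsin y ^ (m - 2) / sqrt (1 - y\<^sup>2))) (at y)"
      unfolding F_def using y \<open>1 - y\<^sup>2 > 0\<close>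
      by (auto intro!: derivative_eq_intros has_real_derivative_eval_arcsin_pow_fps
          simp: numeral_2_eq_2 divide_inverse algebra_simps)
    then show ?thesis
      unfolding prev' using eval_arcsin_pow_fps_ode[OF y, of m] by simp
  qed
  then have "F x = F 0"
    using x by (rule eq_at_0_if_deriv_zero)
  moreover have "F 0 = 0"
    by (cases m) (simp_all add: F_def eval_fps_at_0 arcsin_pow_fps_def)
  ultimately show ?thesis
    by (simp add: F_def)
qed

lemma arcsin_pow_eq_if_first_order_ode:
  fixes x :: real
  assumes ode: "\<And>y. \<bar>y\<bar> < 1 \<Longrightarrow>
      (1 - y\<^sup>2) * eval_fps (fps_deriv (arcsin_pow_fps m)) y - y * eval_fps (arcsin_pow_fps m) y
        = real m * arcsin y ^ (m - 1)"
    and x: "\<bar>x\<bar> < 1"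
  shows "arcsin x ^ m = sqrt (1 - x\<^sup>2) * eval_fps (arcsin_pow_fps m) x"
proof -
  define G where "G y = sqrt (1 - y\<^sup>2) * eval_fps (arcsin_pow_fps m) y - arcsin y ^ m" for y
  have "(G has_real_derivative 0) (at y)" if y: "\<bar>y\<bar> < 1" for y
  proof -
    have "1 - y\<^sup>2 > 0"
      using y by (simp add: abs_square_less_1)
    then have sqrt_sqrt: "sqrt (1 - y\<^sup>2) * (sqrt (1 - y\<^sup>2) * z) = (1 - y\<^sup>2) * z" for z
      by (simp flip: mult.assoc)
    have "(G has_real_derivative
        ((1 - y\<^sup>2) * eval_fps (fps_deriv (arcsin_pow_fps m)) y - y * eval_fps (arcsin_pow_fps m) y
          - real m * arcsin y ^ (m - 1)) / sqrt (1 - y\<^sup>2)) (at y)"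
      unfolding G_def using y \<open>1 - y\<^sup>2 > 0\<close>
      by (auto intro!: derivative_eq_intros has_real_derivative_eval_arcsin_pow_fps
          simp: field_simps sqrt_sqrt)
    then show ?thesis
      using ode[OF y] by simp
  qed
  then have "G x = G 0"
    using x by (rule eq_at_0_if_deriv_zero)
  then show ?thesis
    by (cases m) (simp_all add: G_def eval_fps_at_0 arcsin_pow_fps_def)
qed

lemma arcsin_pow_eq_eval_arcsin_pow_fps:
  fixes x :: real
  assumes "\<bar>x\<bar> < 1"
  shows "arcsin x ^ m = sqrt (1 - x\<^sup>2) * eval_fps (arcsin_pow_fps m) x"
  using assms
proof (induction m arbitrary: x rule: less_induct)
  case (less m)
  show ?case
    using arcsin_pow_fps_first_order_ode less.IH
    by (intro arcsin_pow_eq_if_first_order_ode less.prems) auto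
qed

lemma arcsin_pow_fps_eq_fps_X_power_mult:
  "arcsin_pow_fps m = fps_X ^ m * fps_shift m (arcsin_pow_fps m)"
  by (rule fps_ext) (simp add: fps_X_power_mult_nth arcsin_pow_fps_def arcsin_num_eq_0_if_less)

lemma arcsin_pow_fps_nth_add_even:
  "fps_nth (arcsin_pow_fps m) (m + 2 * k) * t ^ (2 * k) =
     (-1) ^ k * Q (m + 1) (2 * k) 2 / real ((m + 2 * k) choose m) * (2 * t) ^ (2 * k) / fact (2 * k)"
proof -
  have nth: "fps_nth (arcsin_pow_fps m) (m + 2 * k)
      = fact m / fact (m + 2 * k) * ((-4) ^ k * Q (m + 1) (2 * k) 2)"
    by (simp add: arcsin_pow_fps_def arcsin_num_eq_Q)
  have binom: "real ((m + 2 * k) choose m) = fact (m + 2 * k) / (fact m * fact (2 * k))"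
    by (subst binomial_fact) auto
  have pow: "(2 * t) ^ (2 * k) = 4 ^ k * t ^ (2 * k)" "(-4 :: real) ^ k = (-1) ^ k * 4 ^ k"
    by (simp add: power_mult_distrib power_mult) (simp flip: power_mult_distrib)
  show ?thesis
    unfolding nth binom pow by (simp add: field_simps)
qed

lemma arcsin_pow_fps_nth_add_odd: "fps_nth (arcsin_pow_fps m) (Suc (m + 2 * k)) = 0"
  by (simp add: arcsin_pow_fps_def arcsin_num_eq_0_if_odd)

lemma sums_eval_fps_shift_arcsin_pow_fps:
  fixes t :: real
  assumes "\<bar>t\<bar> < 1"
  shows "(\<lambda>k. (-1) ^ (k + 1) * Q (m + 1) (2 * (k + 1)) 2
      / real ((m + 2 * (k + 1)) choose m) * (2 * t) ^ (2 * (k + 1)) / fact (2 * (k + 1))) sums (eval_fps (fps_shift m (arcsin_pow_fps m)) t - 1)"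
proof -
  define B where "B = fps_shift m (arcsin_pow_fps m)"
  define h where "h k = fps_nth B (2 * k) * t ^ (2 * k)" for k
  have "h sums eval_fps B t"
    unfolding h_def using norm_less_fps_conv_radius_arcsin_pow_fps(1)[OF assms, of m]
    by (intro sums_eval_fps_even) (simp_all add: B_def arcsin_pow_fps_nth_add_odd add.commute)
  moreover have "h 0 = 1"
    by (simp add: h_def B_def arcsin_pow_fps_def)
  ultimately have "(\<lambda>k. h (Suc k)) sums (eval_fps B t - 1)"
    using sums_Suc_iff[of h "eval_fps B t - 1"] by simp
  moreover have "h (Suc k) = (-1) ^ (k + 1) * Q (m + 1) (2 * (k + 1)) 2
      / real ((m + 2 * (k + 1)) choose m) * (2 * t) ^ (2 * (k + 1)) / fact (2 * (k + 1))" for k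
    using arcsin_pow_fps_nth_add_even[of m "Suc k" t] by (simp add: h_def B_def add.commute)
  ultimately show ?thesis
    by (simp add: B_def)
qed

lemma arcsin_pow_div_sqrt_eq:
  fixes t :: real
  assumes "\<bar>t\<bar> < 1"
  shows "arcsin t ^ m / sqrt (1 - t\<^sup>2) = t ^ m * eval_fps (fps_shift m (arcsin_pow_fps m)) t"
proof -
  have "0 < 1 - t\<^sup>2"
    using assms by (simp add: abs_square_less_1)
  moreover have "eval_fps (arcsin_pow_fps m) t = t ^ m * eval_fps (fps_shift m (arcsin_pow_fps m)) t"
    using norm_less_fps_conv_radius_arcsin_pow_fps(1)[OF assms, of m]
    by (subst arcsin_pow_fps_eq_fps_X_power_mult) (simp add: eval_fps_mult)
  ultimately show ?thesis
    using arcsin_pow_eq_eval_arcsin_pow_fps[OF assms, of m] by simp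
qed

theorem corollary2p1:
  fixes m :: nat and t :: real
  assumes "\<bar>t\<bar> < 1"
  shows "summable (\<lambda>k. (-1) ^ (k + 1) * Q (m + 1) (2 * (k + 1)) 2
              / real ((m + 2 * (k + 1)) choose m) * (2 * t) ^ (2 * (k + 1)) / fact (2 * (k + 1)))
       \<and> arcsin t ^ m / sqrt (1 - t\<^sup>2) =
           t ^ m * (1 + (\<Sum>k. (-1) ^ (k + 1) * Q (m + 1) (2 * (k + 1)) 2
              / real ((m + 2 * (k + 1)) choose m) * (2 * t) ^ (2 * (k + 1)) / fact (2 * (k + 1))))"
  using sums_eval_fps_shift_arcsin_pow_fps[OF assms, of m] arcsin_pow_div_sqrt_eq[OF assms, of m]
  by (auto simp: sums_iff)

end
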